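(* Let $n,p,r\ge 1$, let $A_0,A_1\in\mathbb{R}^{n\times n}$, $B\in\mathbb{R}^{n\times r}$, $C\in\mathbb{R}^{p\times n}$, and consider the second order linear discrete-time system $$x_{t+2}=A_0x_t+A_1x_{t+1}+Bu_t,\qquad x_0=a_0,\ x_1=a_1,\qquad y_t=Cx_t,\qquad t=0,1,2,\dots,$$ with states $x_t\in\mathbb{R}^n$, inputs $u_t\in\mathbb{R}^r$, outputs $y_t\in\mathbb{R}^p$ and unknown initial vectors $a_0,a_1\in\mathbb{R}^n$. Define matrices $S_k,P_k\in\mathbb{R}^{n\times n}$ by $S_0=A_0$, $P_0=A_1$ and, for $k\ge 1$, $S_k=P_{k-1}A_0$, $P_k=S_{k-1}+P_{k-1}A_1$. Let $\mathcal{O}(A_0,A_1,C)$ be the $(2np)\times(2n)$ block matrix whose block rows are, in order, $$\begin{bmatrix} C & 0_{p\times n}\end{bmatrix},\ \begin{bmatrix} 0_{p\times n} & C\end{bmatrix},\ \begin{bmatrix} CS_0 & CP_0\end{bmatrix},\ \begin{bmatrix} CS_1 & CP_1\end{bmatrix},\ \dots,\ \begin{bmatrix} CS_{2n-3} & CP_{2n-3}\end{bmatrix}.$$ Then the system is observable if and only if $\operatorname{rank}\mathcal{O}(A_0,A_1,C)=2n$.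
   Context: The system is called observable (at time $t=0$) if there exists some $t_1>0$ such that the initial state $(x_0,x_1)=(a_0,a_1)$ can be uniquely determined from the knowledge of $u_t$ and $y_t$ for $t=0,1,\dots,t_1$. Here $0_{\ell\times m}$ denotes the $\ell\times m$ zero matrix. *)

theory Defs
  imports "Jordan_Normal_Form.DL_Rank"
begin

fun traj :: "real mat \<Rightarrow> real mat \<Rightarrow> real mat \<Rightarrow> (nat \<Rightarrow> real vec) \<Rightarrow> real vec \<Rightarrow> real vec \<Rightarrow> nat \<Rightarrow> real vec" where
  "traj A0 A1 B u a0 a1 0 = a0"
| "traj A0 A1 B u a0 a1 (Suc 0) = a1"
| "traj A0 A1 B u a0 a1 (Suc (Suc t)) =
     A0 *\<^sub>v traj A0 A1 B u a0 a1 t + A1 *\<^sub>v traj A0 A1 B u a0 a1 (Suc t) + B *\<^sub>v u t"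

definition observable :: "nat \<Rightarrow> nat \<Rightarrow> real mat \<Rightarrow> real mat \<Rightarrow> real mat \<Rightarrow> real mat \<Rightarrow> bool" where
  "observable n r A0 A1 B C \<longleftrightarrow>
    (\<exists>t1>0. \<forall>u a0 a1 b0 b1.
       (\<forall>t. u t \<in> carrier_vec r) \<and>
       a0 \<in> carrier_vec n \<and> a1 \<in> carrier_vec n \<and> b0 \<in> carrier_vec n \<and> b1 \<in> carrier_vec n \<and>
       (\<forall>t\<le>t1. C *\<^sub>v traj A0 A1 B u a0 a1 t = C *\<^sub>v traj A0 A1 B u b0 b1 t)
       \<longrightarrow> a0 = b0 \<and> a1 = b1)"

fun SP :: "real mat \<Rightarrow> real mat \<Rightarrow> nat \<Rightarrow> real mat \<times> real mat" where
  "SP A0 A1 0 = (A0, A1)"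
| "SP A0 A1 (Suc k) = (snd (SP A0 A1 k) * A0, fst (SP A0 A1 k) + snd (SP A0 A1 k) * A1)"

definition S_mat :: "real mat \<Rightarrow> real mat \<Rightarrow> nat \<Rightarrow> real mat" where
  "S_mat A0 A1 k = fst (SP A0 A1 k)"

definition P_mat :: "real mat \<Rightarrow> real mat \<Rightarrow> nat \<Rightarrow> real mat" where
  "P_mat A0 A1 k = snd (SP A0 A1 k)"

text \<open>Left and right (p x n) halves of the k-th block row (k = 0 .. 2n-1) of the
  observability matrix: [C | 0], [0 | C], [C S_0 | C P_0], ..., [C S_(2n-3) | C P_(2n-3)].\<close>
definition obs_left :: "nat \<Rightarrow> nat \<Rightarrow> real mat \<Rightarrow> real mat \<Rightarrow> real mat \<Rightarrow> nat \<Rightarrow> real mat" where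
  "obs_left n p A0 A1 C k =
     (if k = 0 then C else if k = 1 then 0\<^sub>m p n else C * S_mat A0 A1 (k - 2))"

definition obs_right :: "nat \<Rightarrow> nat \<Rightarrow> real mat \<Rightarrow> real mat \<Rightarrow> real mat \<Rightarrow> nat \<Rightarrow> real mat" where
  "obs_right n p A0 A1 C k =
     (if k = 0 then 0\<^sub>m p n else if k = 1 then C else C * P_mat A0 A1 (k - 2))"

definition obs_matrix :: "nat \<Rightarrow> nat \<Rightarrow> real mat \<Rightarrow> real mat \<Rightarrow> real mat \<Rightarrow> real mat" where
  "obs_matrix n p A0 A1 C = mat (2 * n * p) (2 * n) (\<lambda>(i, j).
     if j < n then obs_left n p A0 A1 C (i div p) $$ (i mod p, j)
     else obs_right n p A0 A1 C (i div p) $$ (i mod p, j - n))"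

end

(* Stack the state as z_t = (x_t, x_(t+1)) in R^2n.  Block row k of the observability matrix maps z_0 to the output C x_k of the
   free response, and block row k+1 at z agrees with block row k at the shifted state
   (x_1, A0 x_0 + A1 x_1).  So once the kernel condition of some block row is implied by those of
   the earlier rows, the same holds for every later row; and since R^2n contains no triangular
   family of 2n+1 vectors, this happens within the first 2n rows.  Hence the outputs on
   [0, 2n-1] already determine the initial state, which is exactly rank O = 2n. *)
theory Submission
  imports Defs
begin

lemma mult_mat_vec_unit_vec:
  fixes A :: "'a :: semiring_1 mat"
  assumes "A \<in> carrier_mat nr nc" and "i < nc"
  shows "A *\<^sub>v unit_vec nc i = col A i"
  using assms by (intro eq_vecI) auto

lemma (in vec_space) maximal_lin_indpt_cols_exists:
  obtains S where "maximal S (\<lambda>T. T \<subseteq> set (cols A) \<and> lin_indpt T)"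
  using maximal_exists[of "\<lambda>T. T \<subseteq> set (cols A) \<and> lin_indpt T" "card (set (cols A))" "{}"]
  by (meson List.finite_set card_mono empty_iff empty_subsetI finite_lin_indpt2 rev_finite_subset)

lemma (in vec_space) rank_le_nr:
  assumes A: "A \<in> carrier_mat n nc"
  shows "rank A \<le> n"
proof -
  obtain S where S: "maximal S (\<lambda>T. T \<subseteq> set (cols A) \<and> lin_indpt T)"
    by (rule maximal_lin_indpt_cols_exists)
  then have "S \<subseteq> carrier_vec n" "lin_indpt S"
    using cols_dim[of A] A unfolding maximal_def by auto
  then have "card S \<le> n" using li_le_dim(2)[OF fin_dim] dim_is_n by simp
  then show ?thesis using rank_card_indpt[OF A S] by simp
qed

lemma (in vec_space) rank_lt_nc_if_not_distinct_cols:
  assumes A: "A \<in> carrier_mat n nc" and "\<not> distinct (cols A)"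
  shows "rank A < nc"
proof -
  obtain S where S: "maximal S (\<lambda>T. T \<subseteq> set (cols A) \<and> lin_indpt T)"
    by (rule maximal_lin_indpt_cols_exists)
  have "card S \<le> card (set (cols A))" using S by (simp add: card_mono maximal_def)
  also have "\<dots> < length (cols A)"
    using assms(2) card_distinct card_length le_neq_implies_less by blast
  finally show ?thesis using rank_card_indpt[OF A S] A by simp
qed

lemma (in vec_space) rank_eq_nc_iff_trivial_kernel:
  assumes A: "A \<in> carrier_mat n nc"
  shows "rank A = nc \<longleftrightarrow> (\<forall>v\<in>carrier_vec nc. A *\<^sub>v v = 0\<^sub>v n \<longrightarrow> v = 0\<^sub>v nc)"
proof
  assume rank: "rank A = nc"
  then have distinct: "distinct (cols A)" using rank_lt_nc_if_not_distinct_cols[OF A] by auto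
  then have "lin_indpt (set (cols A))" using full_rank_lin_indpt[OF A rank] by blast
  then show "\<forall>v\<in>carrier_vec nc. A *\<^sub>v v = 0\<^sub>v n \<longrightarrow> v = 0\<^sub>v nc"
    using lin_depI[OF A] distinct by blast
next
  assume kernel: "\<forall>v\<in>carrier_vec nc. A *\<^sub>v v = 0\<^sub>v n \<longrightarrow> v = 0\<^sub>v nc"
  have distinct: "distinct (cols A)"
  proof (rule ccontr)
    assume "\<not> distinct (cols A)"
    then obtain i j where ij: "i \<noteq> j" "i < nc" "j < nc" "col A i = col A j"
      using A by (auto simp: distinct_conv_nth)
    define v :: "'a vec" where "v = unit_vec nc i - unit_vec nc j"
    have "A *\<^sub>v v = col A i - col A j"
      unfolding v_def using A ij by (simp add: mult_minus_distrib_mat_vec mult_mat_vec_unit_vec)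
    also have "\<dots> = 0\<^sub>v n" using ij(4) A by auto
    finally have "A *\<^sub>v v = 0\<^sub>v n" .
    moreover have "v $ i = 1" using ij unfolding v_def by simp
    then have "v \<noteq> 0\<^sub>v nc" using ij(2) by auto
    ultimately show False using kernel unfolding v_def by auto
  qed
  have "lin_indpt (set (cols A))"
    using lin_depE[OF A _ distinct] kernel by metis
  then show "rank A = nc" using lin_indpt_full_rank[OF A distinct] by blast
qed

lemma wide_mat_nontrivial_kernel:
  fixes A :: "'a :: field mat"
  assumes A: "A \<in> carrier_mat nr nc" and "nr < nc"
  obtains v where "v \<in> carrier_vec nc" "v \<noteq> 0\<^sub>v nc" "A *\<^sub>v v = 0\<^sub>v nr"
proof -
  have "vec_space.rank nr A \<noteq> nc" using vec_space.rank_le_nr[OF A] assms(2) by simp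
  then show ?thesis using vec_space.rank_eq_nc_iff_trivial_kernel[OF A] that by blast
qed

lemma triangular_family_length_lt:
  fixes G :: "nat \<Rightarrow> 'a :: field mat" and W :: "nat \<Rightarrow> 'a vec"
  assumes G: "\<And>j. j \<le> k \<Longrightarrow> G j \<in> carrier_mat p m"
    and W: "\<And>j. j \<le> k \<Longrightarrow> W j \<in> carrier_vec m"
    and diag: "\<And>j. j \<le> k \<Longrightarrow> G j *\<^sub>v W j \<noteq> 0\<^sub>v p"
    and upper: "\<And>j l. j < l \<Longrightarrow> l \<le> k \<Longrightarrow> G j *\<^sub>v W l = 0\<^sub>v p"
  shows "k < m"
proof (rule ccontr)
  assume "\<not> k < m"
  define Z where "Z = mat_of_cols m (map W [0..<Suc k])"
  have Z: "Z \<in> carrier_mat m (Suc k)"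
    unfolding Z_def using mat_of_cols_carrier(1)[of m "map W [0..<Suc k]"] by (simp del: upt_Suc)
  have col_Z: "col Z l = W l" if "l \<le> k" for l
    unfolding Z_def using that W[OF that] by (subst col_mat_of_cols) (auto simp del: upt_Suc)
  obtain c where c: "c \<in> carrier_vec (Suc k)" "c \<noteq> 0\<^sub>v (Suc k)" "Z *\<^sub>v c = 0\<^sub>v m"
    using wide_mat_nontrivial_kernel[OF Z] \<open>\<not> k < m\<close> by auto
  \<comment> \<open>G j kills W l for l > j, and c vanishes below j, so G j (Z c) = c_j (G j W j).\<close>
  have "c $ j = 0" if "j \<le> k" for j
    using that
  proof (induction j rule: less_induct)
    case (less j)
    have Gj: "G j \<in> carrier_mat p m" using G[OF less.prems] .
    obtain i where i: "i < p" "(G j *\<^sub>v W j) $ i \<noteq> 0"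
      using diag[OF less.prems] Gj by (metis carrier_matD(1) dim_mult_mat_vec eq_vecI index_zero_vec)
    have "0 = ((G j * Z) *\<^sub>v c) $ i"
      using c Gj Z i by simp
    also have "\<dots> = row (G j * Z) i \<bullet> c"
      using Gj i by (intro index_mult_mat_vec) simp
    also have "\<dots> = (\<Sum>l<Suc k. (G j *\<^sub>v W l) $ i * c $ l)"
      unfolding scalar_prod_def using Gj Z c(1) i col_Z
      by (auto simp: lessThan_atLeast0 less_Suc_eq_le intro!: sum.cong)
    also have "\<dots> = (\<Sum>l<Suc k. if l = j then (G j *\<^sub>v W j) $ i * c $ j else 0)"
    proof (intro sum.cong refl)
      fix l assume "l \<in> {..<Suc k}"
      moreover have "G j *\<^sub>v W l = 0\<^sub>v p" if "j < l" "l \<le> k" using upper that .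
      ultimately show "(G j *\<^sub>v W l) $ i * c $ l = (if l = j then (G j *\<^sub>v W j) $ i * c $ j else 0)"
        using less.IH[of l] less.prems i by (cases l j rule: linorder_cases) auto
    qed
    also have "\<dots> = (G j *\<^sub>v W j) $ i * c $ j"
      using less.prems by simp
    finally show "c $ j = 0" using i by simp
  qed
  then have "c = 0\<^sub>v (Suc k)" using c(1) by (intro eq_vecI) auto
  with c(2) show False ..
qed

lemma kernel_chain_stabilizes:
  fixes G :: "nat \<Rightarrow> 'a :: field mat"
  assumes G: "\<And>t. G t \<in> carrier_mat p m"
    and shift_carrier: "\<And>w. w \<in> carrier_vec m \<Longrightarrow> \<sigma> w \<in> carrier_vec m"
    and shift: "\<And>t w. w \<in> carrier_vec m \<Longrightarrow> G (Suc t) *\<^sub>v w = G t *\<^sub>v \<sigma> w"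
    and w: "w \<in> carrier_vec m" and zero: "\<And>t. t < m \<Longrightarrow> G t *\<^sub>v w = 0\<^sub>v p"
  shows "G t *\<^sub>v w = 0\<^sub>v p"
proof -
  define stable where
    "stable j \<longleftrightarrow> (\<forall>v\<in>carrier_vec m. (\<forall>t<j. G t *\<^sub>v v = 0\<^sub>v p) \<longrightarrow> G j *\<^sub>v v = 0\<^sub>v p)" for j
  have stable_Suc: "stable (Suc j)" if "stable j" for j
    unfolding stable_def
  proof (intro ballI impI)
    fix v assume v: "v \<in> carrier_vec m" and "\<forall>t<Suc j. G t *\<^sub>v v = 0\<^sub>v p"
    then have "\<forall>t<j. G t *\<^sub>v \<sigma> v = 0\<^sub>v p" using shift by auto
    then have "G j *\<^sub>v \<sigma> v = 0\<^sub>v p" using that shift_carrier[OF v] unfolding stable_def by blast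
    then show "G (Suc j) *\<^sub>v v = 0\<^sub>v p" using shift[OF v] by simp
  qed
  obtain j0 where j0: "j0 \<le> m" "stable j0"
  proof (rule ccontr)
    assume "\<not> thesis"
    then have "\<forall>j. \<exists>v. j \<le> m \<longrightarrow> v \<in> carrier_vec m \<and> (\<forall>t<j. G t *\<^sub>v v = 0\<^sub>v p) \<and> G j *\<^sub>v v \<noteq> 0\<^sub>v p"
      using that unfolding stable_def by blast
    then obtain W where W: "\<And>j. j \<le> m \<Longrightarrow>
        W j \<in> carrier_vec m \<and> (\<forall>t<j. G t *\<^sub>v W j = 0\<^sub>v p) \<and> G j *\<^sub>v W j \<noteq> 0\<^sub>v p"
      by metis
    have "m < m" by (rule triangular_family_length_lt[of m G p m W]) (use G W in auto)
    then show False ..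
  qed
  have "stable j" if "j0 \<le> j" for j
    using that by (induction j rule: dec_induct) (use j0 stable_Suc in auto)
  then show ?thesis
  proof (induction t rule: less_induct)
    case (less t)
    show ?case
      using zero less w j0(1) unfolding stable_def by (cases "t < m") auto
  qed
qed

fun hom_traj :: "'a :: semiring_0 mat \<Rightarrow> 'a mat \<Rightarrow> 'a vec \<Rightarrow> 'a vec \<Rightarrow> nat \<Rightarrow> 'a vec" where
  "hom_traj A0 A1 d0 d1 0 = d0"
| "hom_traj A0 A1 d0 d1 (Suc 0) = d1"
| "hom_traj A0 A1 d0 d1 (Suc (Suc t)) =
     A0 *\<^sub>v hom_traj A0 A1 d0 d1 t + A1 *\<^sub>v hom_traj A0 A1 d0 d1 (Suc t)"

lemma hom_traj_Suc:
  "hom_traj A0 A1 d0 d1 (Suc t) = hom_traj A0 A1 d1 (A0 *\<^sub>v d0 + A1 *\<^sub>v d1) t"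
proof -
  have "hom_traj A0 A1 d0 d1 (Suc t) = hom_traj A0 A1 d1 (A0 *\<^sub>v d0 + A1 *\<^sub>v d1) t \<and>
        hom_traj A0 A1 d0 d1 (Suc (Suc t)) = hom_traj A0 A1 d1 (A0 *\<^sub>v d0 + A1 *\<^sub>v d1) (Suc t)"
    by (induction t) auto
  then show ?thesis ..
qed

lemma S_P_mat_carrier:
  assumes "A0 \<in> carrier_mat n n" "A1 \<in> carrier_mat n n"
  shows "S_mat A0 A1 k \<in> carrier_mat n n" "P_mat A0 A1 k \<in> carrier_mat n n"
proof -
  have "S_mat A0 A1 k \<in> carrier_mat n n \<and> P_mat A0 A1 k \<in> carrier_mat n n"
    using assms by (induction k) (auto simp: S_mat_def P_mat_def)
  then show "S_mat A0 A1 k \<in> carrier_mat n n" "P_mat A0 A1 k \<in> carrier_mat n n" by auto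
qed

lemma hom_traj_eq_S_P_mat:
  assumes A0: "A0 \<in> carrier_mat n n" and A1: "A1 \<in> carrier_mat n n"
    and "d0 \<in> carrier_vec n" "d1 \<in> carrier_vec n"
  shows "hom_traj A0 A1 d0 d1 (Suc (Suc k)) = S_mat A0 A1 k *\<^sub>v d0 + P_mat A0 A1 k *\<^sub>v d1"
  using assms(3,4)
proof (induction k arbitrary: d0 d1)
  case 0
  then show ?case by (simp add: S_mat_def P_mat_def)
next
  case (Suc k)
  let ?S = "S_mat A0 A1 k" and ?P = "P_mat A0 A1 k"
  have S: "?S \<in> carrier_mat n n" and P: "?P \<in> carrier_mat n n"
    using S_P_mat_carrier[OF A0 A1] by auto
  have "hom_traj A0 A1 d0 d1 (Suc (Suc (Suc k))) = ?S *\<^sub>v d1 + ?P *\<^sub>v (A0 *\<^sub>v d0 + A1 *\<^sub>v d1)"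
    using Suc A0 A1 by (simp only: hom_traj_Suc[of _ _ d0] Suc.IH add_carrier_vec mult_mat_vec_carrier)
  also have "\<dots> = (?P * A0) *\<^sub>v d0 + (?S + ?P * A1) *\<^sub>v d1"
    using S P A0 A1 Suc.prems
    by (intro eq_vecI) (auto simp: mult_add_distrib_mat_vec add_mult_distrib_mat_vec algebra_simps)
  finally show ?case by (simp add: S_mat_def P_mat_def)
qed

lemma traj_carrier:
  assumes "A0 \<in> carrier_mat n n" "A1 \<in> carrier_mat n n" "B \<in> carrier_mat n r"
    and "\<And>t. u t \<in> carrier_vec r" and "a0 \<in> carrier_vec n" "a1 \<in> carrier_vec n"
  shows "traj A0 A1 B u a0 a1 t \<in> carrier_vec n"
proof -
  have "traj A0 A1 B u a0 a1 t \<in> carrier_vec n \<and> traj A0 A1 B u a0 a1 (Suc t) \<in> carrier_vec n"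
    using assms by (induction t) auto
  then show ?thesis ..
qed

lemma traj_diff_eq_hom_traj:
  assumes A0: "A0 \<in> carrier_mat n n" and A1: "A1 \<in> carrier_mat n n" and B: "B \<in> carrier_mat n r"
    and u: "\<And>t. u t \<in> carrier_vec r"
    and a: "a0 \<in> carrier_vec n" "a1 \<in> carrier_vec n" and b: "b0 \<in> carrier_vec n" "b1 \<in> carrier_vec n"
  shows "traj A0 A1 B u a0 a1 t - traj A0 A1 B u b0 b1 t = hom_traj A0 A1 (a0 - b0) (a1 - b1) t"
proof -
  let ?x = "traj A0 A1 B u a0 a1" and ?y = "traj A0 A1 B u b0 b1"
    and ?h = "hom_traj A0 A1 (a0 - b0) (a1 - b1)"
  have input_cancels: "(A0 *\<^sub>v x + A1 *\<^sub>v x' + B *\<^sub>v w) - (A0 *\<^sub>v y + A1 *\<^sub>v y' + B *\<^sub>v w) =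
      A0 *\<^sub>v (x - y) + A1 *\<^sub>v (x' - y')"
    if "x \<in> carrier_vec n" "x' \<in> carrier_vec n" "y \<in> carrier_vec n" "y' \<in> carrier_vec n"
      "w \<in> carrier_vec r" for x x' y y' w
    using that A0 A1 B by (intro eq_vecI) (auto simp: mult_minus_distrib_mat_vec)
  have "?x t - ?y t = ?h t \<and> ?x (Suc t) - ?y (Suc t) = ?h (Suc t)"
  proof (induction t)
    case (Suc t)
    then show ?case
      using input_cancels traj_carrier[OF A0 A1 B u] a b u by simp
  qed simp
  then show ?thesis ..
qed

lemma output_eq_iff_hom_output_zero:
  assumes A0: "A0 \<in> carrier_mat n n" and A1: "A1 \<in> carrier_mat n n" and B: "B \<in> carrier_mat n r"
    and C: "C \<in> carrier_mat p n" and u: "\<And>t. u t \<in> carrier_vec r"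
    and a: "a0 \<in> carrier_vec n" "a1 \<in> carrier_vec n" and b: "b0 \<in> carrier_vec n" "b1 \<in> carrier_vec n"
  shows "C *\<^sub>v traj A0 A1 B u a0 a1 t = C *\<^sub>v traj A0 A1 B u b0 b1 t \<longleftrightarrow>
         C *\<^sub>v hom_traj A0 A1 (a0 - b0) (a1 - b1) t = 0\<^sub>v p"
proof -
  let ?x = "traj A0 A1 B u a0 a1 t" and ?y = "traj A0 A1 B u b0 b1 t"
  have x: "?x \<in> carrier_vec n" and y: "?y \<in> carrier_vec n"
    using traj_carrier[OF A0 A1 B u] a b by auto
  have "C *\<^sub>v hom_traj A0 A1 (a0 - b0) (a1 - b1) t = C *\<^sub>v ?x - C *\<^sub>v ?y"
    using traj_diff_eq_hom_traj[OF A0 A1 B u a b] mult_minus_distrib_mat_vec[OF C x y] by simp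
  then show ?thesis using C x y by (auto simp: vec_eq_iff)
qed

definition determines_initial_state ::
  "nat \<Rightarrow> nat \<Rightarrow> 'a :: semiring_0 mat \<Rightarrow> 'a mat \<Rightarrow> 'a mat \<Rightarrow> nat \<Rightarrow> bool" where
  "determines_initial_state n p A0 A1 C T \<longleftrightarrow>
    (\<forall>d0\<in>carrier_vec n. \<forall>d1\<in>carrier_vec n.
       (\<forall>t\<le>T. C *\<^sub>v hom_traj A0 A1 d0 d1 t = 0\<^sub>v p) \<longrightarrow> d0 = 0\<^sub>v n \<and> d1 = 0\<^sub>v n)"

lemma observable_iff_determines_initial_state:
  assumes A0: "A0 \<in> carrier_mat n n" and A1: "A1 \<in> carrier_mat n n" and B: "B \<in> carrier_mat n r"
    and C: "C \<in> carrier_mat p n"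
  shows "observable n r A0 A1 B C \<longleftrightarrow> (\<exists>T>0. determines_initial_state n p A0 A1 C T)"
proof
  assume "observable n r A0 A1 B C"
  then obtain T where "T > 0" and unique: "\<And>u a0 a1 b0 b1. \<forall>t. u t \<in> carrier_vec r \<Longrightarrow>
      a0 \<in> carrier_vec n \<Longrightarrow> a1 \<in> carrier_vec n \<Longrightarrow> b0 \<in> carrier_vec n \<Longrightarrow> b1 \<in> carrier_vec n \<Longrightarrow>
      \<forall>t\<le>T. C *\<^sub>v traj A0 A1 B u a0 a1 t = C *\<^sub>v traj A0 A1 B u b0 b1 t \<Longrightarrow> a0 = b0 \<and> a1 = b1"
    unfolding observable_def by blast
  have "determines_initial_state n p A0 A1 C T"
    unfolding determines_initial_state_def
  proof (intro ballI impI)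
    fix d0 d1 assume d: "d0 \<in> carrier_vec n" "d1 \<in> carrier_vec n"
      and zero: "\<forall>t\<le>T. C *\<^sub>v hom_traj A0 A1 d0 d1 t = 0\<^sub>v p"
    let ?u = "\<lambda>_. 0\<^sub>v r :: real vec"
    have "C *\<^sub>v traj A0 A1 B ?u d0 d1 t = C *\<^sub>v traj A0 A1 B ?u (0\<^sub>v n) (0\<^sub>v n) t" if "t \<le> T" for t
      using output_eq_iff_hom_output_zero[OF A0 A1 B C _ d zero_carrier_vec zero_carrier_vec]
        zero that d by simp
    then show "d0 = 0\<^sub>v n \<and> d1 = 0\<^sub>v n"
      using unique[of ?u d0 d1 "0\<^sub>v n" "0\<^sub>v n"] d by auto
  qed
  then show "\<exists>T>0. determines_initial_state n p A0 A1 C T" using \<open>T > 0\<close> by blast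
next
  assume "\<exists>T>0. determines_initial_state n p A0 A1 C T"
  then obtain T where "T > 0" and determines: "determines_initial_state n p A0 A1 C T" by blast
  show "observable n r A0 A1 B C"
    unfolding observable_def
  proof (intro exI[of _ T] conjI[OF \<open>T > 0\<close>] allI impI, elim conjE)
    fix u a0 a1 b0 b1
    assume u: "\<forall>t. u t \<in> carrier_vec r"
      and a: "a0 \<in> carrier_vec n" "a1 \<in> carrier_vec n" and b: "b0 \<in> carrier_vec n" "b1 \<in> carrier_vec n"
      and eq: "\<forall>t\<le>T. C *\<^sub>v traj A0 A1 B u a0 a1 t = C *\<^sub>v traj A0 A1 B u b0 b1 t"
    have "\<forall>t\<le>T. C *\<^sub>v hom_traj A0 A1 (a0 - b0) (a1 - b1) t = 0\<^sub>v p"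
      using output_eq_iff_hom_output_zero[OF A0 A1 B C _ a b] u eq by blast
    then have "a0 - b0 = 0\<^sub>v n \<and> a1 - b1 = 0\<^sub>v n"
      using determines a b unfolding determines_initial_state_def by (meson minus_carrier_vec)
    then show "a0 = b0 \<and> a1 = b1" using a b by (auto simp: vec_eq_iff)
  qed
qed

definition obs_block :: "nat \<Rightarrow> nat \<Rightarrow> real mat \<Rightarrow> real mat \<Rightarrow> real mat \<Rightarrow> nat \<Rightarrow> real mat" where
  "obs_block n p A0 A1 C k = mat p (2 * n) (\<lambda>(i, j).
     if j < n then obs_left n p A0 A1 C k $$ (i, j) else obs_right n p A0 A1 C k $$ (i, j - n))"

lemma obs_block_carrier: "obs_block n p A0 A1 C k \<in> carrier_mat p (2 * n)"
  unfolding obs_block_def by simp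

lemma obs_left_right_carrier:
  assumes "A0 \<in> carrier_mat n n" "A1 \<in> carrier_mat n n" "C \<in> carrier_mat p n"
  shows "obs_left n p A0 A1 C k \<in> carrier_mat p n" "obs_right n p A0 A1 C k \<in> carrier_mat p n"
  using assms S_P_mat_carrier[OF assms(1,2), of "k - 2"] by (auto simp: obs_left_def obs_right_def)

lemma obs_block_mult_append:
  assumes A0: "A0 \<in> carrier_mat n n" and A1: "A1 \<in> carrier_mat n n" and C: "C \<in> carrier_mat p n"
    and d0: "d0 \<in> carrier_vec n" and d1: "d1 \<in> carrier_vec n"
  shows "obs_block n p A0 A1 C k *\<^sub>v (d0 @\<^sub>v d1) = C *\<^sub>v hom_traj A0 A1 d0 d1 k"
proof -
  let ?L = "obs_left n p A0 A1 C k" and ?R = "obs_right n p A0 A1 C k"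
  have L: "?L \<in> carrier_mat p n" and R: "?R \<in> carrier_mat p n"
    using obs_left_right_carrier[OF A0 A1 C] by auto
  have "obs_block n p A0 A1 C k *\<^sub>v (d0 @\<^sub>v d1) = ?L *\<^sub>v d0 + ?R *\<^sub>v d1"
  proof (rule eq_vecI)
    fix i assume "i < dim_vec (?L *\<^sub>v d0 + ?R *\<^sub>v d1)"
    then have i: "i < p" using R by simp
    have "row (obs_block n p A0 A1 C k) i = row ?L i @\<^sub>v row ?R i"
      using L R i by (intro eq_vecI) (auto simp: obs_block_def)
    moreover have "row ?L i \<in> carrier_vec n" "row ?R i \<in> carrier_vec n" using L R by (auto simp: row_def)
    ultimately show "(obs_block n p A0 A1 C k *\<^sub>v (d0 @\<^sub>v d1)) $ i = (?L *\<^sub>v d0 + ?R *\<^sub>v d1) $ i"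
      using L R i scalar_prod_append[OF _ _ d0 d1] by (simp add: obs_block_def)
  qed (use R in \<open>simp add: obs_block_def\<close>)
  also have "\<dots> = C *\<^sub>v hom_traj A0 A1 d0 d1 k"
  proof -
    consider "k = 0" | "k = 1" | m where "k = Suc (Suc m)"
      by (metis One_nat_def not0_implies_Suc)
    then show ?thesis
    proof cases
      case (3 m)
      have "S_mat A0 A1 m \<in> carrier_mat n n" "P_mat A0 A1 m \<in> carrier_mat n n"
        using S_P_mat_carrier[OF A0 A1] by auto
      then show ?thesis using 3 C d0 d1
        by (simp add: obs_left_def obs_right_def hom_traj_eq_S_P_mat[OF A0 A1 d0 d1]
            mult_add_distrib_mat_vec del: hom_traj.simps(3))
    qed (use C d0 d1 in \<open>auto simp: obs_left_def obs_right_def\<close>)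
  qed
  finally show ?thesis .
qed

lemma obs_matrix_mult_eq_0_iff:
  assumes z: "z \<in> carrier_vec (2 * n)"
  shows "obs_matrix n p A0 A1 C *\<^sub>v z = 0\<^sub>v (2 * n * p) \<longleftrightarrow>
         (\<forall>k<2 * n. obs_block n p A0 A1 C k *\<^sub>v z = 0\<^sub>v p)"
proof -
  have entry: "(obs_matrix n p A0 A1 C *\<^sub>v z) $ j = (obs_block n p A0 A1 C (j div p) *\<^sub>v z) $ (j mod p)"
    if j: "j < 2 * n * p" for j
  proof -
    have "j mod p < p" using j by (cases "p = 0") auto
    then have "row (obs_matrix n p A0 A1 C) j = row (obs_block n p A0 A1 C (j div p)) (j mod p)"
      using j by (intro eq_vecI) (auto simp: obs_matrix_def obs_block_def)
    then show ?thesis using j \<open>j mod p < p\<close> by (simp add: obs_matrix_def obs_block_def)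
  qed
  show ?thesis
  proof
    assume zero: "obs_matrix n p A0 A1 C *\<^sub>v z = 0\<^sub>v (2 * n * p)"
    show "\<forall>k<2 * n. obs_block n p A0 A1 C k *\<^sub>v z = 0\<^sub>v p"
    proof (intro allI impI eq_vecI)
      fix k i assume k: "k < 2 * n" and "i < dim_vec (0\<^sub>v p :: real vec)"
      then have i: "i < p" by simp
      have "(k + 1) * p \<le> 2 * n * p" using k by (intro mult_right_mono) auto
      then have "k * p + i < 2 * n * p" using i by simp
      then show "(obs_block n p A0 A1 C k *\<^sub>v z) $ i = 0\<^sub>v p $ i"
        using entry[of "k * p + i"] zero i by simp
    qed (simp add: obs_block_def)
  next
    assume "\<forall>k<2 * n. obs_block n p A0 A1 C k *\<^sub>v z = 0\<^sub>v p"
    then show "obs_matrix n p A0 A1 C *\<^sub>v z = 0\<^sub>v (2 * n * p)"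
    proof (intro eq_vecI)
      fix j assume "j < dim_vec (0\<^sub>v (2 * n * p) :: real vec)"
      then have j: "j < 2 * n * p" by simp
      moreover have "p > 0" using j by (cases p) auto
      ultimately have "j div p < 2 * n" "j mod p < p"
        by (auto simp: less_mult_imp_div_less)
      then show "(obs_matrix n p A0 A1 C *\<^sub>v z) $ j = 0\<^sub>v (2 * n * p) $ j"
        using entry[OF j] j \<open>\<forall>k<2 * n. _\<close> by simp
    qed (simp add: obs_matrix_def)
  qed
qed

lemma hom_output_vanishing_stabilizes:
  fixes A0 A1 C :: "real mat"
  assumes A0: "A0 \<in> carrier_mat n n" and A1: "A1 \<in> carrier_mat n n" and C: "C \<in> carrier_mat p n"
    and d0: "d0 \<in> carrier_vec n" and d1: "d1 \<in> carrier_vec n"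
    and zero: "\<And>t. t < 2 * n \<Longrightarrow> C *\<^sub>v hom_traj A0 A1 d0 d1 t = 0\<^sub>v p"
  shows "C *\<^sub>v hom_traj A0 A1 d0 d1 t = 0\<^sub>v p"
proof -
  let ?shift = "\<lambda>z. vec_last z n @\<^sub>v (A0 *\<^sub>v vec_first z n + A1 *\<^sub>v vec_last z n)"
  have "obs_block n p A0 A1 C t *\<^sub>v (d0 @\<^sub>v d1) = 0\<^sub>v p"
  proof (rule kernel_chain_stabilizes[where \<sigma> = ?shift])
    fix k and z :: "real vec" assume z: "z \<in> carrier_vec (2 * n)"
    then have "z = vec_first z n @\<^sub>v vec_last z n" by (metis mult_2 vec_first_last_append)
    then show "obs_block n p A0 A1 C (Suc k) *\<^sub>v z = obs_block n p A0 A1 C k *\<^sub>v ?shift z"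
      using A0 A1 by (metis obs_block_mult_append[OF A0 A1 C] hom_traj_Suc
          vec_first_carrier vec_last_carrier add_carrier_vec mult_mat_vec_carrier)
  qed (use obs_block_carrier obs_block_mult_append[OF A0 A1 C d0 d1] zero A0 A1 d0 d1 in
      \<open>auto simp: mult_2\<close>)
  then show ?thesis using obs_block_mult_append[OF A0 A1 C d0 d1] by simp
qed

lemma rank_obs_matrix_eq_iff:
  assumes A0: "A0 \<in> carrier_mat n n" and A1: "A1 \<in> carrier_mat n n" and C: "C \<in> carrier_mat p n"
    and "n > 0"
  shows "vec_space.rank (2 * n * p) (obs_matrix n p A0 A1 C) = 2 * n \<longleftrightarrow>
    determines_initial_state n p A0 A1 C (2 * n - 1)"
proof -
  have "obs_matrix n p A0 A1 C \<in> carrier_mat (2 * n * p) (2 * n)"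
    unfolding obs_matrix_def by simp
  then have "vec_space.rank (2 * n * p) (obs_matrix n p A0 A1 C) = 2 * n \<longleftrightarrow>
      (\<forall>z\<in>carrier_vec (n + n). obs_matrix n p A0 A1 C *\<^sub>v z = 0\<^sub>v (2 * n * p) \<longrightarrow> z = 0\<^sub>v (n + n))"
    using vec_space.rank_eq_nc_iff_trivial_kernel by (simp add: mult_2)
  also have "\<dots> \<longleftrightarrow> (\<forall>d0\<in>carrier_vec n. \<forall>d1\<in>carrier_vec n.
      obs_matrix n p A0 A1 C *\<^sub>v (d0 @\<^sub>v d1) = 0\<^sub>v (2 * n * p) \<longrightarrow> d0 @\<^sub>v d1 = 0\<^sub>v (n + n))"
    by (rule all_vec_append)
  also have "\<dots> \<longleftrightarrow> determines_initial_state n p A0 A1 C (2 * n - 1)"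
  proof -
    have "0\<^sub>v (n + n) = 0\<^sub>v n @\<^sub>v (0\<^sub>v n :: real vec)" by auto
    moreover have "t \<le> 2 * n - 1 \<longleftrightarrow> t < 2 * n" for t using \<open>n > 0\<close> by linarith
    ultimately show ?thesis
      using obs_matrix_mult_eq_0_iff obs_block_mult_append[OF A0 A1 C]
      by (simp add: determines_initial_state_def mult_2)
  qed
  finally show ?thesis .
qed

lemma determines_initial_state_within_2n:
  fixes A0 A1 C :: "real mat"
  assumes "A0 \<in> carrier_mat n n" "A1 \<in> carrier_mat n n" "C \<in> carrier_mat p n"
    and "determines_initial_state n p A0 A1 C T"
  shows "determines_initial_state n p A0 A1 C (2 * n - 1)"
  unfolding determines_initial_state_def
proof (intro ballI impI)
  fix d0 d1 assume d: "d0 \<in> carrier_vec n" "d1 \<in> carrier_vec n"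
    and zero: "\<forall>t\<le>2 * n - 1. C *\<^sub>v hom_traj A0 A1 d0 d1 t = 0\<^sub>v p"
  have "C *\<^sub>v hom_traj A0 A1 d0 d1 t = 0\<^sub>v p" for t
    using hom_output_vanishing_stabilizes[OF assms(1-3) d] zero by simp
  then show "d0 = 0\<^sub>v n \<and> d1 = 0\<^sub>v n"
    using assms(4) d unfolding determines_initial_state_def by blast
qed

theorem theorem2p1:
  fixes n p r :: nat and A0 A1 B C :: "real mat"
  assumes "n \<ge> 1" and "p \<ge> 1" and "r \<ge> 1"
    and "A0 \<in> carrier_mat n n" and "A1 \<in> carrier_mat n n"
    and "B \<in> carrier_mat n r" and "C \<in> carrier_mat p n"
  shows "observable n r A0 A1 B C \<longleftrightarrow>
         vec_space.rank (2 * n * p) (obs_matrix n p A0 A1 C :: real mat) = 2 * n"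
proof -
  have "observable n r A0 A1 B C \<longleftrightarrow> (\<exists>T>0. determines_initial_state n p A0 A1 C T)"
    using observable_iff_determines_initial_state[OF assms(4-7)] .
  also have "\<dots> \<longleftrightarrow> determines_initial_state n p A0 A1 C (2 * n - 1)"
  proof
    show "determines_initial_state n p A0 A1 C (2 * n - 1)"
      if "\<exists>T>0. determines_initial_state n p A0 A1 C T"
      using that determines_initial_state_within_2n[OF assms(4,5,7)] by blast
    show "\<exists>T>0. determines_initial_state n p A0 A1 C T"
      if "determines_initial_state n p A0 A1 C (2 * n - 1)"
      using that assms(1) by (intro exI[of _ "2 * n - 1"]) simp
  qed
  also have "\<dots> \<longleftrightarrow> vec_space.rank (2 * n * p) (obs_matrix n p A0 A1 C) = 2 * n"
    using rank_obs_matrix_eq_iff[OF assms(4,5,7)] assms(1) by simp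
  finally show ?thesis .
qed

end
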